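(* Let $\mathcal{S}$ be the stabilizer group of an $[[n,1,3]]$ stabilizer code on $n$ qubits. Let $g \in \mathcal{S}$ be a stabilizer generator of weight $w_g \ge 3$, written as $g = P_{a_1} P_{a_2} \cdots P_{a_{w_g}}$, where $a_1, \dots, a_{w_g}$ are the distinct qubits on which $g$ acts nontrivially, listed in the order in which the ancilla-controlled gates $\mathrm{C}\text{-}P_{a_1}, \dots, \mathrm{C}\text{-}P_{a_{w_g}}$ are applied during bare-ancilla syndrome extraction, and each $P_{a_i}\in\{X,Y,Z\}$ acts on qubit $a_i$. Consider a fault in a single ancilla–data gate $\mathrm{C}\text{-}P_{a_i}$ producing a two-qubit Pauli error on the ancilla and data qubit $a_i$; the resulting error on the data qubits is of the form $E_{i,Q} = Q_{a_i} \prod_{j > i} P_{a_j}$ with $Q \in \{X, Y, Z\}$ acting on qubit $a_i$. Let $$\mathcal{U}_g = \{E_{i,Q} : 1\le i\le w_g,\ Q\in\{X,Y,Z\},\ w(E_{i,Q}) > 1 \text{ and } w(E_{i,Q}\, s) > 1 \text{ for all } s \in \mathcal{S}\}.$$ Then $|\mathcal{U}_g| \le 3(w_g - 2)$.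
   Context: For a Pauli operator $E$ on $n$ qubits, $w(E)$ denotes its weight, i.e. the number of qubits on which $E$ acts nontrivially (global phases are ignored). Bare-ancilla syndrome extraction of $g$: a single ancilla is prepared in $|+\rangle$, the ancilla-controlled gates $\mathrm{C}\text{-}P_{a_1}, \dots, \mathrm{C}\text{-}P_{a_{w_g}}$ are applied in this order, and the ancilla is measured in the $X$ basis; an ancilla error occurring after gate $\mathrm{C}\text{-}P_{a_i}$ propagates to the data qubits as $\prod_{j>i}P_{a_j}$. Elements of $\mathcal{U}_g$ are called uncorrectable errors (errors not correctable by a distance-three code). *)

theory Defs
  imports Main
begin

datatype pauli = PI | PX | PY | PZ

fun pmul :: "pauli \<Rightarrow> pauli \<Rightarrow> pauli" where
  "pmul PI q = q"
| "pmul p PI = p"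
| "pmul PX PX = PI" | "pmul PY PY = PI" | "pmul PZ PZ = PI"
| "pmul PX PY = PZ" | "pmul PY PX = PZ"
| "pmul PY PZ = PX" | "pmul PZ PY = PX"
| "pmul PZ PX = PY" | "pmul PX PZ = PY"

text \<open>Phase exponent k (phase i^k) arising in the single-qubit product p*q.\<close>
fun pphase :: "pauli \<Rightarrow> pauli \<Rightarrow> nat" where
  "pphase PX PY = 1" | "pphase PY PZ = 1" | "pphase PZ PX = 1"
| "pphase PY PX = 3" | "pphase PZ PY = 3" | "pphase PX PZ = 3"
| "pphase _ _ = 0"

text \<open>Pauli strings on n qubits (qubits 0..n-1); values outside are irrelevant
  and required to be PI. A phased Pauli is (k, P) meaning i^k P with k < 4.\<close>
type_synonym pstring = "nat \<Rightarrow> pauli"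
type_synonym ppauli = "nat \<times> pstring"

definition valid_string :: "nat \<Rightarrow> pstring \<Rightarrow> bool" where
  "valid_string n P \<longleftrightarrow> (\<forall>q. n \<le> q \<longrightarrow> P q = PI)"

definition valid_pp :: "nat \<Rightarrow> ppauli \<Rightarrow> bool" where
  "valid_pp n A \<longleftrightarrow> fst A < 4 \<and> valid_string n (snd A)"

definition smul :: "pstring \<Rightarrow> pstring \<Rightarrow> pstring" where
  "smul P R = (\<lambda>q. pmul (P q) (R q))"

definition ppmul :: "nat \<Rightarrow> ppauli \<Rightarrow> ppauli \<Rightarrow> ppauli" where
  "ppmul n A B = ((fst A + fst B + (\<Sum>q<n. pphase (snd A q) (snd B q))) mod 4,
                  smul (snd A) (snd B))"

definition pp_id :: ppauli where "pp_id = (0, \<lambda>_. PI)"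
definition pp_minus_id :: ppauli where "pp_minus_id = (2, \<lambda>_. PI)"

definition weight :: "nat \<Rightarrow> pstring \<Rightarrow> nat" where
  "weight n P = card {q. q < n \<and> P q \<noteq> PI}"

text \<open>Two Pauli strings commute iff they anticommute on an even number of qubits.\<close>
definition commutes :: "nat \<Rightarrow> pstring \<Rightarrow> pstring \<Rightarrow> bool" where
  "commutes n P R \<longleftrightarrow>
     even (card {q. q < n \<and> P q \<noteq> PI \<and> R q \<noteq> PI \<and> P q \<noteq> R q})"

inductive_set generated :: "nat \<Rightarrow> ppauli set \<Rightarrow> ppauli set" for n G where
  gen_id: "pp_id \<in> generated n G"
| gen_base: "A \<in> G \<Longrightarrow> A \<in> generated n G"
| gen_mul: "A \<in> generated n G \<Longrightarrow> B \<in> generated n G \<Longrightarrow> ppmul n A B \<in> generated n G"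

definition stabilizer_group :: "nat \<Rightarrow> ppauli set \<Rightarrow> bool" where
  "stabilizer_group n S \<longleftrightarrow>
     (\<forall>A\<in>S. valid_pp n A) \<and> pp_id \<in> S \<and>
     (\<forall>A\<in>S. \<forall>B\<in>S. ppmul n A B \<in> S) \<and> pp_minus_id \<notin> S"

definition logical_op :: "nat \<Rightarrow> ppauli set \<Rightarrow> pstring \<Rightarrow> bool" where
  "logical_op n S P \<longleftrightarrow> valid_string n P \<and> (\<forall>A\<in>S. commutes n P (snd A))
      \<and> (\<forall>k. (k, P) \<notin> S)"

definition stabilizer_code :: "nat \<Rightarrow> nat \<Rightarrow> nat \<Rightarrow> ppauli set \<Rightarrow> bool" where
  "stabilizer_code n k d S \<longleftrightarrow>
     stabilizer_group n S \<and> k \<le> n \<and> card S = 2 ^ (n - k) \<and>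
     (\<forall>P. logical_op n S P \<longrightarrow> d \<le> weight n P) \<and>
     (\<exists>P. logical_op n S P \<and> weight n P = d)"

text \<open>Data error from a fault on gate C-P_{a_i} (0-indexed i), with Q on qubit a_i:
  E_{i,Q} = Q_{a_i} * prod_{j>i} P_{a_j}, where P = snd g and as = [a_1,...,a_w].\<close>
definition fault_error :: "pstring \<Rightarrow> nat list \<Rightarrow> nat \<Rightarrow> pauli \<Rightarrow> pstring" where
  "fault_error P as i Q =
     (\<lambda>q. if q = as ! i then Q else if q \<in> set (drop (Suc i) as) then P q else PI)"

definition uncorrectable :: "nat \<Rightarrow> ppauli set \<Rightarrow> ppauli \<Rightarrow> nat list \<Rightarrow> pstring set" where
  "uncorrectable n S g as =
     {E. \<exists>i Q. i < length as \<and> Q \<in> {PX, PY, PZ} \<and> E = fault_error (snd g) as i Q \<and>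
         weight n E > 1 \<and> (\<forall>s\<in>S. weight n (smul E (snd s)) > 1)}"

end

theory Submission
  imports Defs
begin

text \<open>A fault on the last gate leaves only the single-qubit error Q on the last qubit, and
  a fault on the first gate leaves an error that differs from g itself only on the first
  qubit, so it is within weight one of a stabilizer. Hence only the w - 2 inner gates,
  each with three choices of Q, can produce uncorrectable errors.\<close>

lemma pmul_self [simp]: "pmul p p = PI"
  by (cases p) auto

lemma weight_le_one_if_supported_at:
  assumes "\<And>q. q < n \<Longrightarrow> q \<noteq> a \<Longrightarrow> P q = PI"
  shows "weight n P \<le> 1"
proof -
  have "{q. q < n \<and> P q \<noteq> PI} \<subseteq> {a}" using assms by blast
  then have "card {q. q < n \<and> P q \<noteq> PI} \<le> card {a}" by (rule card_mono[rotated]) simp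
  then show ?thesis by (simp add: weight_def)
qed

lemma weight_fault_error_last_le_one:
  "weight n (fault_error P as (length as - 1) Q) \<le> 1"
  by (rule weight_le_one_if_supported_at[where a = "as ! (length as - 1)"])
     (simp add: fault_error_def)

lemma weight_smul_fault_error_first_le_one:
  assumes "as \<noteq> []" and supp: "{q. q < n \<and> P q \<noteq> PI} \<subseteq> set as"
  shows "weight n (smul (fault_error P as 0 Q) P) \<le> 1"
proof -
  obtain a rest where as: "as = a # rest" using \<open>as \<noteq> []\<close> by (cases as) auto
  show ?thesis
  proof (rule weight_le_one_if_supported_at[where a = a])
    fix q assume "q < n" "q \<noteq> a"
    then have "q \<in> set rest \<or> P q = PI" using supp as by auto
    with \<open>q \<noteq> a\<close> show "smul (fault_error P as 0 Q) P q = PI"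
      using as by (auto simp: smul_def fault_error_def)
  qed
qed

lemma uncorrectable_subset_inner_faults:
  assumes "g \<in> S" and supp: "{q. q < n \<and> snd g q \<noteq> PI} \<subseteq> set as"
  shows "uncorrectable n S g as \<subseteq>
    (\<lambda>(i, Q). fault_error (snd g) as i Q) ` ({1..<length as - 1} \<times> {PX, PY, PZ})"
proof
  fix E assume "E \<in> uncorrectable n S g as"
  then obtain i Q where i: "i < length as" and Q: "Q \<in> {PX, PY, PZ}"
    and E: "E = fault_error (snd g) as i Q" and heavy: "weight n E > 1"
    and heavy_coset: "\<forall>s\<in>S. weight n (smul E (snd s)) > 1"
    unfolding uncorrectable_def by blast
  have "i \<noteq> length as - 1"
    using heavy weight_fault_error_last_le_one[of n "snd g" as Q] E by auto
  moreover have "i \<noteq> 0"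
  proof
    assume "i = 0"
    have "as \<noteq> []" using i by auto
    then have "weight n (smul E (snd g)) \<le> 1"
      using weight_smul_fault_error_first_le_one[OF _ supp] E \<open>i = 0\<close> by simp
    with heavy_coset \<open>g \<in> S\<close> show False by fastforce
  qed
  ultimately have "i \<in> {1..<length as - 1}" using i by auto
  with Q E show "E \<in> (\<lambda>(i, Q). fault_error (snd g) as i Q) ` ({1..<length as - 1} \<times> {PX, PY, PZ})"
    by blast
qed

lemma card_uncorrectable_le:
  assumes "g \<in> S" and "{q. q < n \<and> snd g q \<noteq> PI} \<subseteq> set as"
  shows "card (uncorrectable n S g as) \<le> 3 * (length as - 2)"
proof -
  let ?faults = "{1..<length as - 1} \<times> {PX, PY, PZ}"
  have "card (uncorrectable n S g as) \<le> card ((\<lambda>(i, Q). fault_error (snd g) as i Q) ` ?faults)"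
    by (rule card_mono[OF _ uncorrectable_subset_inner_faults[OF assms]]) simp
  also have "\<dots> \<le> card ?faults" by (rule card_image_le) simp
  also have "\<dots> = 3 * (length as - 2)" by (simp add: card_cartesian_product)
  finally show ?thesis .
qed

theorem lemma2:
  fixes n :: nat and S G :: "ppauli set" and g :: ppauli and as :: "nat list"
  assumes code: "stabilizer_code n 1 3 S"
    and gens: "G \<subseteq> S" "generated n G = S" "card G = n - 1" "g \<in> G"
    and order: "distinct as" "set as = {q. q < n \<and> snd g q \<noteq> PI}"
    and wt: "length as \<ge> 3"
  shows "card (uncorrectable n S g as) \<le> 3 * (length as - 2)"
proof (rule card_uncorrectable_le)
  show "g \<in> S" using gens by blast
  show "{q. q < n \<and> snd g q \<noteq> PI} \<subseteq> set as" using order(2) by simp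
qed

end
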